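(* Let $\mathbb{F}$ be any field. The support rank of the $2\times 2$ matrix multiplication tensor $\langle 2,2,2\rangle$ over $\mathbb{F}$ is $7$. That is, every tensor $t\in \mathbb{F}^{2\times 2}\otimes\mathbb{F}^{2\times 2}\otimes\mathbb{F}^{2\times 2}$ with the same support as $\langle 2,2,2\rangle$ has tensor rank at least $7$, and some such tensor has tensor rank exactly $7$.
   Context: Let $e_{ij}$ ($i,j\in\{1,2\}$) be the standard basis of the space $\mathbb{F}^{2\times 2}$ of $2\times 2$ matrices. The matrix multiplication tensor is $\langle 2,2,2\rangle=\sum_{i,j,k\in\{1,2\}} e_{ij}\otimes e_{jk}\otimes e_{ki}\in \mathbb{F}^{2\times 2}\otimes\mathbb{F}^{2\times 2}\otimes\mathbb{F}^{2\times 2}$. The tensor rank of a tensor $t$ is the smallest $r$ such that $t$ is a sum of $r$ simple tensors $v_1\otimes v_2\otimes v_3$. With respect to the fixed basis $\{e_{ab}\otimes e_{cd}\otimes e_{ef}\}$, the support of a tensor is the set of basis elements at which it has a nonzero coefficient. The support rank of $t$ is the minimal tensor rank of a tensor (over $\mathbb{F}$) having the same support as $t$. *)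

theory Defs
  imports Main
begin

text \<open>Matrix indices i,j in {1,2} are encoded by the two elements of type bool.
  A basis element e_ij of F^{2x2} is indexed by a pair (i,j) :: bool \<times> bool.
  A tensor in F^{2x2} (x) F^{2x2} (x) F^{2x2} is given by its coefficient function
  on the basis {e_ab (x) e_cd (x) e_ef}.\<close>

type_synonym midx = "bool \<times> bool"
type_synonym 'a tensor3 = "midx \<times> midx \<times> midx \<Rightarrow> 'a"

definition sum_simple :: "nat \<Rightarrow> (nat \<Rightarrow> midx \<Rightarrow> 'a::field) \<Rightarrow> (nat \<Rightarrow> midx \<Rightarrow> 'a)
     \<Rightarrow> (nat \<Rightarrow> midx \<Rightarrow> 'a) \<Rightarrow> 'a tensor3" where
  "sum_simple r u v w = (\<lambda>(x, y, z). \<Sum>k<r. u k x * v k y * w k z)"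

definition tensor_rank :: "'a::field tensor3 \<Rightarrow> nat" where
  "tensor_rank t = (LEAST r. \<exists>u v w. t = sum_simple r u v w)"

definition supp :: "'a::field tensor3 \<Rightarrow> (midx \<times> midx \<times> midx) set" where
  "supp t = {p. t p \<noteq> 0}"

definition support_rank :: "'a::field tensor3 \<Rightarrow> nat" where
  "support_rank t = (LEAST r. \<exists>s :: 'a tensor3. supp s = supp t \<and> tensor_rank s = r)"

text \<open>The matrix multiplication tensor <2,2,2> = sum_{i,j,k} e_ij (x) e_jk (x) e_ki.\<close>
definition matmul222 :: "'a::field tensor3" where
  "matmul222 = (\<lambda>((a, b), (c, d), (e, f)). if b = c \<and> d = e \<and> f = a then 1 else 0)"

end

theory Submission
  imports Defs "Jordan_Normal_Form.Determinant"
begin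

text \<open>
  Suppose \<open>s\<close> has the support of \<open>\<langle>2,2,2\<rangle>\<close> and \<open>s = \<Sum>l<6. u\<^sub>l \<otimes> v\<^sub>l \<otimes> w\<^sub>l\<close>. Contracting the
  first slot of \<open>s\<close> with \<open>X \<in> F\<^sup>2\<^sup>\<times>\<^sup>2\<close> gives a block-diagonal matrix with two \<open>2 \<times> 2\<close> blocks whose
  entries are nonzero multiples of the entries of \<open>X\<close>; if \<open>X\<close> is killed by three of the \<open>u\<^sub>l\<close>, this
  matrix lies in a space spanned by three of the \<open>w\<^sub>l\<close>. Playing the block structure against this
  dimension bound shows: any three \<open>u\<^sub>l\<close> are independent and have a one-dimensional common kernel,
  no five of them have a common zero, and no three are supported on two coordinates. The support
  is invariant under cyclic permutation of the slots, so the same holds for \<open>v\<close> and \<open>w\<close>.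
  Hence the pairs \<open>{i,j}\<close> for which the four \<open>u\<^sub>l\<close> with \<open>l \<notin> {i,j}\<close> have a common zero form a
  matching, and likewise for \<open>v\<close>; yet for every split into triples \<open>{a,b,c}\<close>, \<open>{p,q,r}\<close> the common zero
  of \<open>u\<^sub>a, u\<^sub>b, u\<^sub>c\<close> is either killed by some \<open>u\<^sub>p\<close> or yields a common zero of \<open>v\<^sub>p, v\<^sub>q, v\<^sub>r\<close> and
  some \<open>v\<^sub>a\<close>. Two matchings on six points always admit a split avoiding both, a contradiction.
  Strassen's algorithm shows that \<open>\<langle>2,2,2\<rangle>\<close> itself has rank 7.
\<close>

section \<open>Linear algebra on \<open>F\<^sup>2\<^sup>\<times>\<^sup>2\<close>\<close>

lemma UNIV_midx: "(UNIV :: midx set) = {(False,False), (False,True), (True,False), (True,True)}"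
  by (auto simp: UNIV_bool)

lemma sum_UNIV_midx:
  "(\<Sum>x\<in>(UNIV :: midx set). g x) = g (False,False) + g (False,True) + g (True,False) + g (True,True)"
  unfolding UNIV_midx by (simp add: add.assoc)

lemma midx_fun_eq_zeroI:
  "(\<And>k. X (k,False) = 0 \<and> X (k,True) = 0) \<Longrightarrow> X = (\<lambda>_. 0)"
  by (rule ext) (metis prod.exhaust)

lemma sum_UNIV_midx_block:
  fixes \<gamma> g :: "midx \<Rightarrow> 'a::comm_ring_1"
  shows "(\<Sum>m\<in>UNIV. \<gamma> m * (if k = fst m then g m else 0)) = \<gamma> (k,False) * g (k,False) + \<gamma> (k,True) * g (k,True)"
  unfolding sum_UNIV_midx by (cases k) simp_all

definition dot :: "(midx \<Rightarrow> 'a::field) \<Rightarrow> (midx \<Rightarrow> 'a) \<Rightarrow> 'a" where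
  "dot f X = (\<Sum>x\<in>UNIV. f x * X x)"

definition delta :: "midx \<Rightarrow> midx \<Rightarrow> 'a::field" where
  "delta y0 = (\<lambda>y. if y = y0 then 1 else 0)"

lemma dot_delta_right [simp]: "dot f (delta y) = f y"
  unfolding dot_def delta_def sum_UNIV_midx by (cases y) auto

lemma dot_delta_left [simp]: "dot (delta y) X = X y"
  unfolding dot_def delta_def sum_UNIV_midx by (cases y) auto

lemma dot_scale: "dot f (\<lambda>z. c * X z) = c * dot f X"
  unfolding dot_def sum_UNIV_midx by (simp add: algebra_simps)

lemma dot_diff_scale: "dot f (\<lambda>z. X z - c * Y z) = dot f X - c * dot f Y"
  unfolding dot_def sum_UNIV_midx by (simp add: algebra_simps)

lemma common_zero_of_three_forms:
  fixes f1 f2 f3 :: "midx \<Rightarrow> 'a::field"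
  shows "\<exists>X. X \<noteq> (\<lambda>_. 0) \<and> dot f1 X = 0 \<and> dot f2 X = 0 \<and> dot f3 X = 0"
proof -
  define idx :: "midx \<Rightarrow> nat" where "idx x = (if fst x then 2 else 0) + (if snd x then 1 else 0)" for x
  define unidx :: "nat \<Rightarrow> midx" where "unidx n = (2 \<le> n, n mod 2 = 1)" for n
  have idx_unidx: "idx (unidx j) = j" if "j < 4" for j
    using that unfolding idx_def unidx_def by (cases j; cases "j - 1"; cases "j - 2"; cases "j - 3"; auto)
  have [simp]: "unidx 0 = (False,False)" "unidx (Suc 0) = (False,True)" "unidx 2 = (True,False)"
    "unidx 3 = (True,True)" "idx (False,False) = 0" "idx (False,True) = Suc 0" "idx (True,False) = 2"
    "idx (True,True) = 3"
    by (simp_all add: unidx_def idx_def)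
  define f :: "nat \<Rightarrow> midx \<Rightarrow> 'a" where "f i = (if i = 0 then f1 else if i = 1 then f2 else f3)" for i
  define A where "A = mat\<^sub>r 4 4 (\<lambda>i. if i = 3 then 0\<^sub>v 4 else vec 4 (\<lambda>j. f i (unidx j)))"
  have A: "A \<in> carrier_mat 4 4" unfolding A_def by simp
  have "det A = 0" unfolding A_def by (rule det_row_0) auto
  then obtain v where v: "v \<in> carrier_vec 4" "v \<noteq> 0\<^sub>v 4" "A *\<^sub>v v = 0\<^sub>v 4"
    using det_0_iff_vec_prod_zero_field[OF A] by auto
  define X where "X x = v $ idx x" for x
  have row: "dot (f i) X = 0" if "i < 3" for i
  proof -
    have "(A *\<^sub>v v) $ i = row A i \<bullet> v" using that A by simp
    with v(3) that have "row A i \<bullet> v = 0" by simp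
    moreover have "row A i = vec 4 (\<lambda>j. f i (unidx j))" unfolding A_def using that by simp
    moreover have "(\<Sum>j\<in>{0..<4::nat}. g j) = g 0 + g 1 + g 2 + g 3" for g :: "nat \<Rightarrow> 'a"
      by (simp add: eval_nat_numeral add.assoc)
    ultimately show ?thesis using v(1)
      by (simp add: scalar_prod_def dot_def sum_UNIV_midx X_def algebra_simps)
  qed
  have "X \<noteq> (\<lambda>_. 0)"
  proof
    assume "X = (\<lambda>_. 0)"
    then have "\<forall>j<4. v $ j = 0" unfolding X_def by (metis idx_unidx)
    then show False using v(1,2) by (auto simp: vec_eq_iff)
  qed
  with row[of 0] row[of 1] row[of 2] show ?thesis by (auto simp: f_def)
qed

lemma dependent_in_span_of_three:
  fixes g :: "midx \<Rightarrow> 'b \<Rightarrow> 'a::field"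
  assumes "\<And>m z. g m z = \<beta>1 m * f1 z + \<beta>2 m * f2 z + \<beta>3 m * f3 z"
  shows "\<exists>\<gamma>. \<gamma> \<noteq> (\<lambda>_. 0) \<and> (\<forall>z. (\<Sum>m\<in>UNIV. \<gamma> m * g m z) = 0)"
proof -
  obtain \<gamma> where \<gamma>: "\<gamma> \<noteq> (\<lambda>_. 0)" "dot \<beta>1 \<gamma> = 0" "dot \<beta>2 \<gamma> = 0" "dot \<beta>3 \<gamma> = 0"
    using common_zero_of_three_forms by blast
  have "(\<Sum>m\<in>UNIV. \<gamma> m * g m z) = dot \<beta>1 \<gamma> * f1 z + dot \<beta>2 \<gamma> * f2 z + dot \<beta>3 \<gamma> * f3 z" for z
    unfolding assms dot_def sum_UNIV_midx by (simp add: algebra_simps)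
  with \<gamma> show ?thesis by auto
qed

lemma nonsingular_2x2_trivial_kernel:
  fixes x y a1 b1 a2 b2 :: "'a::field"
  assumes "x * a1 + y * b1 = 0" "x * a2 + y * b2 = 0" "a1 * b2 - a2 * b1 \<noteq> 0"
  shows "x = 0 \<and> y = 0"
proof -
  have "x * (a1 * b2 - a2 * b1) = b2 * (x * a1 + y * b1) - b1 * (x * a2 + y * b2)"
    "y * (a1 * b2 - a2 * b1) = a1 * (x * a2 + y * b2) - a2 * (x * a1 + y * b1)"
    by (simp_all add: algebra_simps)
  then have "x * (a1 * b2 - a2 * b1) = 0" "y * (a1 * b2 - a2 * b1) = 0"
    using assms(1,2) by simp_all
  with assms(3) show ?thesis by simp
qed

lemma singular_2x2_kernel:
  fixes a11 a12 a21 a22 :: "'a::field"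
  assumes "a11 * a22 - a12 * a21 = 0"
  shows "\<exists>x y. (x \<noteq> 0 \<or> y \<noteq> 0) \<and> a11 * x + a12 * y = 0 \<and> a21 * x + a22 * y = 0"
proof (cases "a11 = 0 \<and> a12 = 0")
  case True
  show ?thesis
  proof (cases "a21 = 0 \<and> a22 = 0")
    case True
    with \<open>a11 = 0 \<and> a12 = 0\<close> show ?thesis by (intro exI[of _ 1] exI[of _ 0]) simp
  next
    case False
    with \<open>a11 = 0 \<and> a12 = 0\<close> show ?thesis
      by (intro exI[of _ a22] exI[of _ "- a21"]) (auto simp: algebra_simps)
  qed
next
  case False
  have "a21 * a12 + a22 * (- a11) = - (a11 * a22 - a12 * a21)" by (simp add: algebra_simps)
  with assms False show ?thesis
    by (intro exI[of _ a12] exI[of _ "- a11"]) (auto simp: algebra_simps)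
qed

definition enum6 :: "nat \<Rightarrow> nat \<Rightarrow> nat \<Rightarrow> nat \<Rightarrow> nat \<Rightarrow> nat \<Rightarrow> bool" where
  "enum6 a b c p q r \<longleftrightarrow> distinct [a,b,c,p,q,r] \<and> {a,b,c,p,q,r} \<subseteq> {..<6}"

lemma enum6_set_eq:
  assumes "enum6 a b c p q r"
  shows "{a,b,c,p,q,r} = {..<6}"
proof -
  have "card (set [a,b,c,p,q,r]) = 6"
    using assms distinct_card unfolding enum6_def by fastforce
  with assms show ?thesis unfolding enum6_def by (intro card_subset_eq) auto
qed

lemma enum6_swap_halves: "enum6 a b c p q r \<Longrightarrow> enum6 p q r a b c"
  unfolding enum6_def by auto

lemma enum6_perm_first:
  "enum6 a b c p q r \<Longrightarrow> enum6 a c b p q r"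
  "enum6 a b c p q r \<Longrightarrow> enum6 c b a p q r"
  unfolding enum6_def by auto

lemma enum6_complete:
  assumes "distinct [p,q,r]" "{p,q,r} \<subseteq> {..<6}"
  shows "\<exists>a b c. enum6 a b c p q r"
proof -
  have "card ({..<6} - {p,q,r}) = 3"
    using assms by (simp add: card_Diff_subset)
  then obtain a b c where abc: "{..<6} - {p,q,r} = {a,b,c}" "a \<noteq> b" "b \<noteq> c" "a \<noteq> c"
    by (auto simp: card_3_iff)
  then have "enum6 a b c p q r" using assms unfolding enum6_def by auto
  then show ?thesis by blast
qed

lemma sum_enum6:
  assumes "enum6 a b c p q r"
  shows "(\<Sum>l<6. g l) = g a + g b + g c + g p + g q + g r"
proof -
  have "(\<Sum>l<6. g l) = sum g (set [a,b,c,p,q,r])" using enum6_set_eq[OF assms] by simp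
  also have "\<dots> = sum_list (map g [a,b,c,p,q,r])"
    using assms unfolding enum6_def by (simp only: sum_list_distinct_conv_sum_set)
  finally show ?thesis by (simp add: add.assoc)
qed

lemma enum6_diff_pair: "enum6 a b c p q r \<Longrightarrow> {..<6} - {q,r} = {a,b,c,p}"
  by (subst enum6_set_eq[symmetric]) (auto simp: enum6_def)

lemma enum6_diff_pairs:
  assumes "enum6 a b c p q r"
  shows "{..<6} - {q,r} = {a,b,c,p}" "{..<6} - {p,r} = {a,b,c,q}" "{..<6} - {p,q} = {a,b,c,r}"
    "{..<6} - {b,c} = {p,q,r,a}" "{..<6} - {a,c} = {p,q,r,b}" "{..<6} - {a,b} = {p,q,r,c}"
proof -
  have "enum6 a b c q p r" "enum6 a b c r p q" "enum6 p q r a b c" "enum6 p q r b a c"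
    "enum6 p q r c a b"
    using assms unfolding enum6_def by auto
  with assms show "{..<6} - {q,r} = {a,b,c,p}" "{..<6} - {p,r} = {a,b,c,q}"
    "{..<6} - {p,q} = {a,b,c,r}" "{..<6} - {b,c} = {p,q,r,a}" "{..<6} - {a,c} = {p,q,r,b}"
    "{..<6} - {a,b} = {p,q,r,c}"
    by (simp_all add: enum6_diff_pair)
qed

text \<open>For two matchings \<open>M\<close>, \<open>N\<close> on six vertices, properly 2-colour the even cycles and paths of
  \<open>M \<union> N\<close> and balance the colour classes; for six vertices this is a finite check.\<close>

lemma two_matchings_good_split:
  fixes M N :: "nat \<Rightarrow> nat \<Rightarrow> bool"
  assumes M_sym: "\<And>i j. M i j = M j i" and N_sym: "\<And>i j. N i j = N j i"
    and M_matching: "\<And>i j k. distinct [i,j,k] \<Longrightarrow> {i,j,k} \<subseteq> {..<6} \<Longrightarrow> M i j \<Longrightarrow> \<not> M i k"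
    and N_matching: "\<And>i j k. distinct [i,j,k] \<Longrightarrow> {i,j,k} \<subseteq> {..<6} \<Longrightarrow> N i j \<Longrightarrow> \<not> N i k"
  shows "\<exists>a b c p q r. enum6 a b c p q r \<and> \<not> (M p q \<or> M p r \<or> M q r \<or> N a b \<or> N a c \<or> N b c)"
proof (rule ccontr)
  assume "\<not> ?thesis"
  then have split: "M p q \<or> M p r \<or> M q r \<or> N a b \<or> N a c \<or> N b c" if "enum6 a b c p q r"
    for a b c p q r
    using that by blast
  have [simp]: "M i j = M j i" "N i j = N j i" if "j < i" for i j :: nat
    using M_sym N_sym by blast+
  have six: "{..<6::nat} = {0,1,2,3,4,5}" by auto
  have
    "\<forall>i\<in>{..<6}. \<forall>j\<in>{..<6}. \<forall>k\<in>{..<6}. distinct [i,j,k] \<longrightarrow> \<not> (M i j \<and> M i k)"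
    "\<forall>i\<in>{..<6}. \<forall>j\<in>{..<6}. \<forall>k\<in>{..<6}. distinct [i,j,k] \<longrightarrow> \<not> (N i j \<and> N i k)"
    using M_matching N_matching by auto
  note matchings = this[unfolded six, simplified]
  note splits =
    split[of 0 1 2 3 4 5] split[of 0 1 3 2 4 5] split[of 0 1 4 2 3 5] split[of 0 1 5 2 3 4]
    split[of 0 2 3 1 4 5] split[of 0 2 4 1 3 5] split[of 0 2 5 1 3 4] split[of 0 3 4 1 2 5]
    split[of 0 3 5 1 2 4] split[of 0 4 5 1 2 3] split[of 1 2 3 0 4 5] split[of 1 2 4 0 3 5]
    split[of 1 2 5 0 3 4] split[of 1 3 4 0 2 5] split[of 1 3 5 0 2 4] split[of 1 4 5 0 2 3]
    split[of 2 3 4 0 1 5] split[of 2 3 5 0 1 4] split[of 2 4 5 0 1 3] split[of 3 4 5 0 1 2]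
  show False
    using matchings splits[simplified enum6_def, simplified] by sat
qed

section \<open>Six-term decompositions of tensors with the support of \<open>\<langle>2,2,2\<rangle>\<close>\<close>

locale decomp6 =
  fixes s :: "'a::field tensor3" and u v w :: "nat \<Rightarrow> midx \<Rightarrow> 'a"
  assumes support: "\<And>a b c d e f. s ((a,b),(c,d),(e,f)) \<noteq> 0 \<longleftrightarrow> b = c \<and> d = e \<and> f = a"
    and decomp: "\<And>x y z. s (x,y,z) = (\<Sum>l<6. u l x * v l y * w l z)"

definition rot :: "'a tensor3 \<Rightarrow> 'a tensor3" where
  "rot t = (\<lambda>(x,y,z). t (z,x,y))"

lemma decomp6_rot:
  assumes "decomp6 s u v w"
  shows "decomp6 (rot s) v w u"
proof -
  interpret decomp6 s u v w by fact
  show ?thesis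
  proof
    fix a b c d e f
    show "rot s ((a,b),(c,d),(e,f)) \<noteq> 0 \<longleftrightarrow> b = c \<and> d = e \<and> f = a"
      unfolding rot_def using support[of e f a b c d] by auto
  next
    fix x y z
    show "rot s (x,y,z) = (\<Sum>l<6. v l x * w l y * u l z)"
      unfolding rot_def using decomp[of z x y] by (simp add: mult_ac)
  qed
qed

context decomp6
begin

lemma s_eq_0: "\<not> (b = c \<and> d = e \<and> f = a) \<Longrightarrow> s ((a,b),(c,d),(e,f)) = 0"
  using support[of a b c d e f] by blast

lemma s_nonzero: "s ((i,j),(j,k),(k,i)) \<noteq> 0"
  using support[of i j j k k i] by blast

definition contract_xy :: "(midx \<Rightarrow> 'a) \<Rightarrow> (midx \<Rightarrow> 'a) \<Rightarrow> midx \<Rightarrow> 'a" where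
  "contract_xy X Y z = (\<Sum>x\<in>UNIV. \<Sum>y\<in>UNIV. X x * Y y * s (x,y,z))"

definition contract_xz :: "(midx \<Rightarrow> 'a) \<Rightarrow> (midx \<Rightarrow> 'a) \<Rightarrow> midx \<Rightarrow> 'a" where
  "contract_xz X Z y = (\<Sum>x\<in>UNIV. \<Sum>z\<in>UNIV. X x * Z z * s (x,y,z))"

lemma contract_xy_decomp: "contract_xy X Y z = (\<Sum>l<6. dot (u l) X * dot (v l) Y * w l z)"
proof -
  have "contract_xy X Y z = (\<Sum>x\<in>UNIV. \<Sum>y\<in>UNIV. \<Sum>l<6. X x * Y y * (u l x * v l y * w l z))"
    by (simp add: contract_xy_def decomp sum_distrib_left)
  also have "\<dots> = (\<Sum>x\<in>UNIV. \<Sum>l<6. \<Sum>y\<in>UNIV. X x * Y y * (u l x * v l y * w l z))"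
    by (rule sum.cong[OF refl], rule sum.swap)
  also have "\<dots> = (\<Sum>l<6. \<Sum>x\<in>UNIV. \<Sum>y\<in>UNIV. X x * Y y * (u l x * v l y * w l z))"
    by (rule sum.swap)
  also have "\<dots> = (\<Sum>l<6. dot (u l) X * dot (v l) Y * w l z)"
    unfolding dot_def sum_product sum_distrib_right
    by (intro sum.cong refl) (simp add: mult_ac sum_distrib_left)
  finally show ?thesis .
qed

lemma contract_xz_decomp: "contract_xz X Z y = (\<Sum>l<6. dot (u l) X * dot (w l) Z * v l y)"
proof -
  have "contract_xz X Z y = (\<Sum>x\<in>UNIV. \<Sum>z\<in>UNIV. \<Sum>l<6. X x * Z z * (u l x * v l y * w l z))"
    by (simp add: contract_xz_def decomp sum_distrib_left)
  also have "\<dots> = (\<Sum>x\<in>UNIV. \<Sum>l<6. \<Sum>z\<in>UNIV. X x * Z z * (u l x * v l y * w l z))"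
    by (rule sum.cong[OF refl], rule sum.swap)
  also have "\<dots> = (\<Sum>l<6. \<Sum>x\<in>UNIV. \<Sum>z\<in>UNIV. X x * Z z * (u l x * v l y * w l z))"
    by (rule sum.swap)
  also have "\<dots> = (\<Sum>l<6. dot (u l) X * dot (w l) Z * v l y)"
    unfolding dot_def sum_product sum_distrib_right
    by (intro sum.cong refl) (simp add: mult_ac sum_distrib_left)
  finally show ?thesis .
qed

lemma contract_xy_in_span:
  assumes "enum6 a b c p q r" "dot (u a) X = 0" "dot (u b) X = 0" "dot (u c) X = 0"
  shows "contract_xy X Y z =
    dot (u p) X * dot (v p) Y * w p z + dot (u q) X * dot (v q) Y * w q z + dot (u r) X * dot (v r) Y * w r z"
  unfolding contract_xy_decomp sum_enum6[OF assms(1)] using assms(2-4) by simp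

lemma contract_xz_in_span:
  assumes "enum6 a b c p q r" "dot (u a) X = 0" "dot (u b) X = 0" "dot (u c) X = 0"
  shows "contract_xz X Z y =
    dot (u p) X * dot (w p) Z * v p y + dot (u q) X * dot (w q) Z * v q y + dot (u r) X * dot (w r) Z * v r y"
  unfolding contract_xz_decomp sum_enum6[OF assms(1)] using assms(2-4) by simp

text \<open>On the support of \<open>\<langle>2,2,2\<rangle>\<close>, contracting the first slot with \<open>X\<close> and one of the other
  slots with a basis vector leaves the entries \<open>coef k X i j\<close> of one \<open>2 \<times> 2\<close> block.\<close>

definition coef :: "bool \<Rightarrow> (midx \<Rightarrow> 'a) \<Rightarrow> bool \<Rightarrow> bool \<Rightarrow> 'a" where
  "coef k X i j = s ((i,j),(j,k),(k,i)) * X (i,j)"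

lemma coef_eq_0_iff: "coef k X i j = 0 \<longleftrightarrow> X (i,j) = 0"
  unfolding coef_def using s_nonzero by simp

lemma contract_xy_pattern:
  "contract_xy X Y (k,i) = X (i,False) * Y (False,k) * s ((i,False),(False,k),(k,i))
     + X (i,True) * Y (True,k) * s ((i,True),(True,k),(k,i))"
  unfolding contract_xy_def sum_UNIV_midx by (cases i; cases k; simp add: s_eq_0)

lemma contract_xy_delta: "contract_xy X (delta (j,k)) (k',i) = (if k' = k then coef k X i j else 0)"
  unfolding contract_xy_pattern coef_def delta_def by (cases j; cases k; cases k'; simp)

lemma contract_xz_delta: "contract_xz X (delta (k,i)) (j,k') = (if k' = k then coef k X i j else 0)"
  unfolding contract_xz_def sum_UNIV_midx coef_def delta_def
  by (cases i; cases j; cases k; cases k'; simp add: s_eq_0)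

definition col_det :: "bool \<Rightarrow> (midx \<Rightarrow> 'a) \<Rightarrow> bool \<Rightarrow> (midx \<Rightarrow> 'a) \<Rightarrow> bool \<Rightarrow> 'a" where
  "col_det k X j X' j' = coef k X False j * coef k X' True j' - coef k X True j * coef k X' False j'"

definition row_det :: "bool \<Rightarrow> (midx \<Rightarrow> 'a) \<Rightarrow> bool \<Rightarrow> (midx \<Rightarrow> 'a) \<Rightarrow> bool \<Rightarrow> 'a" where
  "row_det k X i X' i' = coef k X i False * coef k X' i' True - coef k X i True * coef k X' i' False"

text \<open>Four vectors \<open>contract_xy X (delta (j,k))\<close>, two for each block \<open>k\<close>, are linearly independent
  once each block has a nonsingular \<open>2 \<times> 2\<close> minor; but when every \<open>X\<close> is killed by \<open>u a\<close>,
  \<open>u b\<close>, \<open>u c\<close> they all lie in the span of \<open>w p\<close>, \<open>w q\<close>, \<open>w r\<close>.\<close>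

lemma nonsingular_columns_absurd:
  assumes P: "enum6 a b c p q r"
    and ker: "\<And>k t. dot (u a) (Xk k t) = 0 \<and> dot (u b) (Xk k t) = 0 \<and> dot (u c) (Xk k t) = 0"
    and det: "\<And>k. col_det k (Xk k False) (Jk k False) (Xk k True) (Jk k True) \<noteq> 0"
  shows False
proof -
  define g where "g m = contract_xy (Xk (fst m) (snd m)) (delta (Jk (fst m) (snd m), fst m))" for m
  have span: "g m z = (dot (u p) (Xk (fst m) (snd m)) * dot (v p) (delta (Jk (fst m) (snd m), fst m))) * w p z
      + (dot (u q) (Xk (fst m) (snd m)) * dot (v q) (delta (Jk (fst m) (snd m), fst m))) * w q z
      + (dot (u r) (Xk (fst m) (snd m)) * dot (v r) (delta (Jk (fst m) (snd m), fst m))) * w r z" for m z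
    unfolding g_def using contract_xy_in_span[OF P] ker by simp
  obtain \<gamma> where \<gamma>: "\<gamma> \<noteq> (\<lambda>_. 0)" "\<forall>z. (\<Sum>m\<in>UNIV. \<gamma> m * g m z) = 0"
    using dependent_in_span_of_three[of g _ "w p" _ "w q" _ "w r", OF span] by blast
  have "\<gamma> (k,False) = 0 \<and> \<gamma> (k,True) = 0" for k
  proof -
    have "\<gamma> (k,False) * coef k (Xk k False) i (Jk k False) + \<gamma> (k,True) * coef k (Xk k True) i (Jk k True) = 0"
      for i
      using \<gamma>(2)[rule_format, of "(k,i)"] unfolding g_def contract_xy_delta sum_UNIV_midx_block by simp
    from nonsingular_2x2_trivial_kernel[OF this[of False] this[of True]] det[of k]
    show ?thesis unfolding col_det_def by simp
  qed
  with \<gamma>(1) midx_fun_eq_zeroI show False by blast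
qed

lemma nonsingular_rows_absurd:
  assumes P: "enum6 a b c p q r"
    and ker: "\<And>k t. dot (u a) (Xk k t) = 0 \<and> dot (u b) (Xk k t) = 0 \<and> dot (u c) (Xk k t) = 0"
    and det: "\<And>k. row_det k (Xk k False) (Ik k False) (Xk k True) (Ik k True) \<noteq> 0"
  shows False
proof -
  define g where "g m = contract_xz (Xk (fst m) (snd m)) (delta (fst m, Ik (fst m) (snd m)))" for m
  have span: "g m y = (dot (u p) (Xk (fst m) (snd m)) * dot (w p) (delta (fst m, Ik (fst m) (snd m)))) * v p y
      + (dot (u q) (Xk (fst m) (snd m)) * dot (w q) (delta (fst m, Ik (fst m) (snd m)))) * v q y
      + (dot (u r) (Xk (fst m) (snd m)) * dot (w r) (delta (fst m, Ik (fst m) (snd m)))) * v r y" for m y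
    unfolding g_def using contract_xz_in_span[OF P] ker by simp
  obtain \<gamma> where \<gamma>: "\<gamma> \<noteq> (\<lambda>_. 0)" "\<forall>y. (\<Sum>m\<in>UNIV. \<gamma> m * g m y) = 0"
    using dependent_in_span_of_three[of g _ "v p" _ "v q" _ "v r", OF span] by blast
  have "\<gamma> (k,False) = 0 \<and> \<gamma> (k,True) = 0" for k
  proof -
    have "\<gamma> (k,False) * coef k (Xk k False) (Ik k False) j + \<gamma> (k,True) * coef k (Xk k True) (Ik k True) j = 0"
      for j
      using \<gamma>(2)[rule_format, of "(j,k)"] unfolding g_def contract_xz_delta sum_UNIV_midx_block by simp
    from nonsingular_2x2_trivial_kernel[OF this[of False] this[of True]] det[of k]
    show ?thesis unfolding row_det_def by simp
  qed
  with \<gamma>(1) midx_fun_eq_zeroI show False by blast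
qed

lemma singular_minors_force_zero:
  assumes X: "X (i0,j0) \<noteq> 0" and X': "X' (i0,j0) = 0"
    and "col_det k X j0 X' j0 = 0" "col_det k X' (\<not> j0) X j0 = 0" "row_det k' X i0 X' i0 = 0"
  shows "X' = (\<lambda>_. 0)"
proof -
  have 1: "X' (\<not> i0, j0) = 0"
    using assms(3) X X' unfolding col_det_def by (cases i0) (auto simp: coef_def s_nonzero)
  have 2: "X' (i0, \<not> j0) = 0"
    using assms(5) X X' unfolding row_det_def by (cases j0) (auto simp: coef_def s_nonzero)
  have 3: "X' (\<not> i0, \<not> j0) = 0"
    using assms(4) X X' 2 unfolding col_det_def by (cases i0) (auto simp: coef_def s_nonzero)
  show ?thesis
  proof
    fix x :: midx
    obtain i j where x: "x = (i,j)" by (cases x)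
    show "X' x = 0" using X' 1 2 3 unfolding x by (cases "i = i0"; cases "j = j0") auto
  qed
qed

lemma no_common_zero_of_five:
  assumes P: "enum6 a b c p q r" and X: "X \<noteq> (\<lambda>_. 0)"
    and "dot (u a) X = 0" "dot (u b) X = 0" "dot (u c) X = 0" "dot (u p) X = 0" "dot (u q) X = 0"
  shows False
proof -
  obtain i j where ij: "X (i,j) \<noteq> 0" using X by (metis prod.exhaust ext)
  have t: "contract_xy X (delta (j,k)) z = dot (u r) X * v r (j,k) * w r z" for k z
    using contract_xy_in_span[OF P] assms(3-) by simp
  have "contract_xy X (delta (j,False)) (False,i) \<noteq> 0" "contract_xy X (delta (j,True)) (True,i) \<noteq> 0"
    unfolding contract_xy_delta using ij coef_eq_0_iff by simp_all
  moreover have "contract_xy X (delta (j,True)) (False,i) = 0"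
    unfolding contract_xy_delta by simp
  ultimately show False unfolding t by simp
qed

lemma common_zeros_of_three_independent_absurd:
  assumes P: "enum6 a b c p q r" and X1: "X1 z0 \<noteq> 0" and X2: "X2 z0 = 0" "X2 \<noteq> (\<lambda>_. 0)"
    and ker1: "dot (u a) X1 = 0" "dot (u b) X1 = 0" "dot (u c) X1 = 0"
    and ker2: "dot (u a) X2 = 0" "dot (u b) X2 = 0" "dot (u c) X2 = 0"
  shows False
proof -
  define Xs where "Xs t = (if t then X2 else X1)" for t
  have ker: "dot (u a) (Xs t) = 0 \<and> dot (u b) (Xs t) = 0 \<and> dot (u c) (Xs t) = 0" for t
    using ker1 ker2 by (simp add: Xs_def)
  obtain i0 j0 where z0: "z0 = (i0,j0)" by (cases z0)
  have "(\<forall>k. \<exists>t j t' j'. col_det k (Xs t) j (Xs t') j' \<noteq> 0) \<or> (\<forall>k. \<exists>t i t' i'. row_det k (Xs t) i (Xs t') i' \<noteq> 0)"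
  proof (rule ccontr)
    assume "\<not> ?thesis"
    then obtain k k' where "\<forall>t j t' j'. col_det k (Xs t) j (Xs t') j' = 0" "\<forall>t i t' i'. row_det k' (Xs t) i (Xs t') i' = 0"
      by blast
    then have "col_det k X1 j0 X2 j0 = 0" "col_det k X2 (\<not> j0) X1 j0 = 0" "row_det k' X1 i0 X2 i0 = 0"
      unfolding Xs_def by (metis (full_types))+
    with singular_minors_force_zero X1 X2 show False unfolding z0 by blast
  qed
  then show False
  proof
    assume "\<forall>k. \<exists>t j t' j'. col_det k (Xs t) j (Xs t') j' \<noteq> 0"
    then obtain T J T' J' where "\<And>k. col_det k (Xs (T k)) (J k) (Xs (T' k)) (J' k) \<noteq> 0" by metis
    then show False
      by (intro nonsingular_columns_absurd[OF P, of "\<lambda>k t. Xs (if t then T' k else T k)"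
            "\<lambda>k t. if t then J' k else J k"]) (simp_all add: ker)
  next
    assume "\<forall>k. \<exists>t i t' i'. row_det k (Xs t) i (Xs t') i' \<noteq> 0"
    then obtain T I T' I' where "\<And>k. row_det k (Xs (T k)) (I k) (Xs (T' k)) (I' k) \<noteq> 0" by metis
    then show False
      by (intro nonsingular_rows_absurd[OF P, of "\<lambda>k t. Xs (if t then T' k else T k)"
            "\<lambda>k t. if t then I' k else I k"]) (simp_all add: ker)
  qed
qed

lemma common_zeros_of_three_proportional:
  assumes P: "enum6 a b c p q r" and X: "X \<noteq> (\<lambda>_. 0)"
    and ker: "dot (u a) X = 0" "dot (u b) X = 0" "dot (u c) X = 0"
    and ker': "dot (u a) X' = 0" "dot (u b) X' = 0" "dot (u c) X' = 0"
  shows "\<exists>\<mu>. X' = (\<lambda>z. \<mu> * X z)"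
proof -
  obtain z0 where z0: "X z0 \<noteq> 0" using X by (metis ext)
  define \<mu> where "\<mu> = X' z0 / X z0"
  define X2 where "X2 z = X' z - \<mu> * X z" for z
  have "X2 = (\<lambda>_. 0)"
  proof (rule ccontr)
    assume "X2 \<noteq> (\<lambda>_. 0)"
    moreover have "X2 z0 = 0" using z0 by (simp add: X2_def \<mu>_def)
    ultimately show False
      using common_zeros_of_three_independent_absurd[of a b c p q r X z0 X2, OF P z0] ker ker'
      unfolding X2_def dot_diff_scale by simp
  qed
  then have "X' = (\<lambda>z. \<mu> * X z)" unfolding X2_def by (simp add: fun_eq_iff)
  then show ?thesis by blast
qed

lemma three_independent_last:
  assumes P: "enum6 a b c p q r" and dep: "\<forall>x. \<alpha> * u a x + \<beta> * u b x + \<gamma> * u c x = 0"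
  shows "\<gamma> = 0"
proof (rule ccontr)
  assume \<gamma>: "\<gamma> \<noteq> 0"
  obtain X1 where X1: "X1 \<noteq> (\<lambda>_. 0)" "dot (u a) X1 = 0" "dot (u b) X1 = 0"
    using common_zero_of_three_forms[of "u a" "u b" "u b"] by blast
  obtain z0 where z0: "X1 z0 \<noteq> 0" using X1(1) by (metis ext)
  obtain X2 where X2: "X2 \<noteq> (\<lambda>_. 0)" "dot (u a) X2 = 0" "dot (u b) X2 = 0" "X2 z0 = 0"
    using common_zero_of_three_forms[of "u a" "u b" "delta z0"] by auto
  have "dot (u c) X = 0" if "dot (u a) X = 0" "dot (u b) X = 0" for X
  proof -
    have "\<alpha> * dot (u a) X + \<beta> * dot (u b) X + \<gamma> * dot (u c) X
        = (\<Sum>x\<in>UNIV. (\<alpha> * u a x + \<beta> * u b x + \<gamma> * u c x) * X x)"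
      unfolding dot_def by (simp add: sum_distrib_left sum.distrib algebra_simps)
    also have "\<dots> = 0" by (rule sum.neutral) (simp add: dep[rule_format])
    finally show ?thesis using that \<gamma> by simp
  qed
  with common_zeros_of_three_independent_absurd[of a b c p q r X1 z0 X2, OF P z0] X1 X2 show False by simp
qed

lemma three_independent:
  assumes P: "enum6 a b c p q r" and dep: "\<forall>x. \<alpha> * u a x + \<beta> * u b x + \<gamma> * u c x = 0"
  shows "\<alpha> = 0 \<and> \<beta> = 0 \<and> \<gamma> = 0"
proof -
  have "\<forall>x. \<alpha> * u a x + \<gamma> * u c x + \<beta> * u b x = 0" "\<forall>x. \<gamma> * u c x + \<beta> * u b x + \<alpha> * u a x = 0"
    using dep by (simp_all add: algebra_simps)
  with three_independent_last[OF P dep] three_independent_last[OF enum6_perm_first(1)[OF P]]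
    three_independent_last[OF enum6_perm_first(2)[OF P]]
  show ?thesis by blast
qed

lemma three_not_supported_on_two:
  assumes P: "enum6 a b c p q r" and S: "\<And>l x. l \<in> {a,b,c} \<Longrightarrow> x \<noteq> z1 \<Longrightarrow> x \<noteq> z2 \<Longrightarrow> u l x = 0"
  shows False
proof -
  define e where "e z = (\<lambda>m. if m = (False,False) then u a z else if m = (False,True) then u b z
    else if m = (True,False) then u c z else 0)" for z
  have dot_e: "dot (e z) \<gamma> = \<gamma> (False,False) * u a z + \<gamma> (False,True) * u b z + \<gamma> (True,False) * u c z"
    for z \<gamma> unfolding e_def dot_def sum_UNIV_midx by (simp add: mult.commute)
  obtain \<gamma> where \<gamma>: "\<gamma> \<noteq> (\<lambda>_. 0)" "dot (e z1) \<gamma> = 0" "dot (e z2) \<gamma> = 0" "\<gamma> (True,True) = 0"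
    using common_zero_of_three_forms[of "e z1" "e z2" "delta (True,True)"] by auto
  have "\<forall>x. \<gamma> (False,False) * u a x + \<gamma> (False,True) * u b x + \<gamma> (True,False) * u c x = 0"
    using \<gamma>(2,3) S unfolding dot_e by (metis add_0 insertI1 insertI2 mult_zero_right)
  from three_independent[OF P this] \<gamma>(4) have "\<gamma> = (\<lambda>_. 0)"
    by (intro midx_fun_eq_zeroI) (metis (full_types))
  with \<gamma>(1) show False by simp
qed

definition common_zero :: "nat set \<Rightarrow> bool" where
  "common_zero F \<longleftrightarrow> (\<exists>X. X \<noteq> (\<lambda>_. 0) \<and> (\<forall>l\<in>F. dot (u l) X = 0))"

lemma common_zero_of_four_unique:
  assumes P: "enum6 a b c p q r"
  shows "\<not> (common_zero {a,b,c,p} \<and> common_zero {a,b,c,q})"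
proof
  assume "common_zero {a,b,c,p} \<and> common_zero {a,b,c,q}"
  then obtain X X' where X: "X \<noteq> (\<lambda>_. 0)" "\<forall>l\<in>{a,b,c,p}. dot (u l) X = 0"
    and X': "X' \<noteq> (\<lambda>_. 0)" "\<forall>l\<in>{a,b,c,q}. dot (u l) X' = 0"
    unfolding common_zero_def by blast
  obtain \<mu> where \<mu>: "X' = (\<lambda>z. \<mu> * X z)"
    using common_zeros_of_three_proportional[OF P X(1)] X(2) X'(2) by auto
  with X'(1) have "\<mu> \<noteq> 0" by auto
  moreover have "\<mu> * dot (u q) X = 0" using X'(2) \<mu> dot_scale by (metis insertI1 insert_commute)
  ultimately show False using no_common_zero_of_five[OF P X(1)] X(2) by simp
qed

lemma common_zero_compl_pairs_matching:
  assumes "distinct [i,j,k]" "{i,j,k} \<subseteq> {..<6}" "common_zero ({..<6} - {i,j})"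
  shows "\<not> common_zero ({..<6} - {i,k})"
proof -
  obtain a b c where P: "enum6 a b c k j i" using enum6_complete[of k j i] assms(1,2) by auto
  then have "enum6 a b c j k i" unfolding enum6_def by auto
  with P have "{..<6} - {j,i} = {a,b,c,k}" "{..<6} - {k,i} = {a,b,c,j}"
    by (simp_all add: enum6_diff_pair)
  then have "{..<6} - {i,j} = {a,b,c,k}" "{..<6} - {i,k} = {a,b,c,j}"
    by (simp_all add: insert_commute)
  with common_zero_of_four_unique[OF P] assms(3) show ?thesis by simp
qed

lemma singular_block_exists:
  assumes P: "enum6 a b c p q r" and ker: "dot (u a) X = 0" "dot (u b) X = 0" "dot (u c) X = 0"
  shows "\<exists>k. col_det k X False X True = 0"
  using nonsingular_columns_absurd[OF P, of "\<lambda>_ _. X" "\<lambda>_ t. t"] ker by blast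

lemma annihilator_in_block:
  assumes "col_det k X False X True = 0"
  shows "\<exists>Y. Y \<noteq> (\<lambda>_. 0) \<and> (\<forall>j. Y (j, \<not> k) = 0) \<and> (\<forall>z. contract_xy X Y z = 0)"
proof -
  obtain \<kappa>1 \<kappa>2 where \<kappa>: "\<kappa>1 \<noteq> 0 \<or> \<kappa>2 \<noteq> 0"
      "coef k X False False * \<kappa>1 + coef k X False True * \<kappa>2 = 0"
      "coef k X True False * \<kappa>1 + coef k X True True * \<kappa>2 = 0"
    using singular_2x2_kernel[of "coef k X False False" "coef k X True True"
        "coef k X False True" "coef k X True False"] assms
    unfolding col_det_def by (auto simp: mult.commute)
  define Y where "Y y = (if snd y = k then (if fst y then \<kappa>2 else \<kappa>1) else 0)" for y :: midx
  have "Y (False,k) \<noteq> 0 \<or> Y (True,k) \<noteq> 0" using \<kappa>(1) by (simp add: Y_def)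
  then have "Y \<noteq> (\<lambda>_. 0)" by auto
  moreover have "contract_xy X Y (k',i) = 0" for k' i
  proof (cases "k' = k")
    case True
    then have "contract_xy X Y (k',i) = coef k X i False * \<kappa>1 + coef k X i True * \<kappa>2"
      unfolding contract_xy_pattern Y_def coef_def by (simp add: mult_ac)
    with \<kappa>(2,3) show ?thesis by (cases i) simp_all
  next
    case False
    then show ?thesis unfolding contract_xy_pattern Y_def by simp
  qed
  ultimately show ?thesis by (auto simp: Y_def)
qed

text \<open>Otherwise \<open>w a\<close>, \<open>w b\<close>, \<open>w c\<close> would all vanish outside block \<open>k\<close>, since
  \<open>contract_xy (delta x) Y\<close> vanishes there for every \<open>x\<close>.\<close>

lemma block_common_zero_extends:
  assumes P: "enum6 a b c p q r" and Y: "\<And>j. Y (j, \<not> k) = 0"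
    and pqr: "dot (v p) Y = 0" "dot (v q) Y = 0" "dot (v r) Y = 0"
  shows "dot (v a) Y = 0 \<or> dot (v b) Y = 0 \<or> dot (v c) Y = 0"
proof (rule ccontr)
  assume nz: "\<not> ?thesis"
  interpret W: decomp6 "rot (rot s)" w u v
    by (intro decomp6_rot) (rule decomp6_axioms)
  have "w l (\<not> k, i) = 0" if "l \<in> {a,b,c}" for l i
  proof -
    have "contract_xy (delta x) Y (\<not> k, i) = 0" for x
      unfolding contract_xy_pattern using Y by simp
    then have "\<forall>x. (dot (v a) Y * w a (\<not> k, i)) * u a x + (dot (v b) Y * w b (\<not> k, i)) * u b x
        + (dot (v c) Y * w c (\<not> k, i)) * u c x = 0"
      unfolding contract_xy_decomp sum_enum6[OF P] using pqr by (simp add: mult_ac)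
    from three_independent[OF P this] nz that show ?thesis by auto
  qed
  moreover have "x = (\<not> k, snd x)" if "x \<noteq> (k,False)" "x \<noteq> (k,True)" for x
    using that by (cases x) auto
  ultimately have "w l x = 0" if "l \<in> {a,b,c}" "x \<noteq> (k,False)" "x \<noteq> (k,True)" for l x
    using that by metis
  then show False using W.three_not_supported_on_two[OF P] by blast
qed

text \<open>An annihilator \<open>Y\<close> of \<open>contract_xy X\<close> is killed by \<open>v p\<close>, \<open>v q\<close>, \<open>v r\<close> because
  \<open>w p\<close>, \<open>w q\<close>, \<open>w r\<close> are independent and \<open>X\<close> is killed by none of \<open>u p\<close>, \<open>u q\<close>, \<open>u r\<close>.\<close>

lemma common_zero_u_or_v:
  assumes P: "enum6 a b c p q r"
    and exact: "\<And>X. X \<noteq> (\<lambda>_. 0) \<Longrightarrow> dot (u a) X = 0 \<Longrightarrow> dot (u b) X = 0 \<Longrightarrow> dot (u c) X = 0 \<Longrightarrow>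
       dot (u p) X \<noteq> 0 \<and> dot (u q) X \<noteq> 0 \<and> dot (u r) X \<noteq> 0"
  shows "\<exists>Y. Y \<noteq> (\<lambda>_. 0) \<and> dot (v p) Y = 0 \<and> dot (v q) Y = 0 \<and> dot (v r) Y = 0 \<and>
    (dot (v a) Y = 0 \<or> dot (v b) Y = 0 \<or> dot (v c) Y = 0)"
proof -
  interpret W: decomp6 "rot (rot s)" w u v
    by (intro decomp6_rot) (rule decomp6_axioms)
  obtain X where X: "X \<noteq> (\<lambda>_. 0)" "dot (u a) X = 0" "dot (u b) X = 0" "dot (u c) X = 0"
    using common_zero_of_three_forms by blast
  obtain k where "col_det k X False X True = 0" using singular_block_exists[OF P X(2-4)] by blast
  then obtain Y where Y: "Y \<noteq> (\<lambda>_. 0)" "\<And>j. Y (j, \<not> k) = 0" "\<And>z. contract_xy X Y z = 0"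
    using annihilator_in_block by blast
  have "\<forall>x. (dot (u p) X * dot (v p) Y) * w p x + (dot (u q) X * dot (v q) Y) * w q x
      + (dot (u r) X * dot (v r) Y) * w r x = 0"
  proof
    fix x
    show "(dot (u p) X * dot (v p) Y) * w p x + (dot (u q) X * dot (v q) Y) * w q x
        + (dot (u r) X * dot (v r) Y) * w r x = 0"
      using Y(3)[of x] unfolding contract_xy_in_span[OF P X(2-4)] by simp
  qed
  from W.three_independent[OF enum6_swap_halves[OF P] this] exact[OF X]
  have pqr: "dot (v p) Y = 0" "dot (v q) Y = 0" "dot (v r) Y = 0" by simp_all
  with Y(1) block_common_zero_extends[OF P Y(2) pqr] show ?thesis by blast
qed

lemma six_terms_impossible: False
proof -
  interpret V: decomp6 "rot s" v w u
    by (intro decomp6_rot) (rule decomp6_axioms)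
  define M where "M i j = common_zero ({..<6} - {i,j})" for i j
  define N where "N i j = V.common_zero ({..<6} - {i,j})" for i j
  have "M i j = M j i" "N i j = N j i" for i j
    by (simp_all add: M_def N_def insert_commute)
  then obtain a b c p q r where P: "enum6 a b c p q r"
    and "\<not> (M p q \<or> M p r \<or> M q r \<or> N a b \<or> N a c \<or> N b c)"
    using two_matchings_good_split[of M N] common_zero_compl_pairs_matching
      V.common_zero_compl_pairs_matching
    unfolding M_def N_def by blast
  then have no_u: "\<not> common_zero {a,b,c,p}" "\<not> common_zero {a,b,c,q}" "\<not> common_zero {a,b,c,r}"
    and no_v: "\<not> V.common_zero {p,q,r,a}" "\<not> V.common_zero {p,q,r,b}" "\<not> V.common_zero {p,q,r,c}"
    unfolding M_def N_def enum6_diff_pairs[OF P] by simp_all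
  have "dot (u p) X \<noteq> 0 \<and> dot (u q) X \<noteq> 0 \<and> dot (u r) X \<noteq> 0"
    if "X \<noteq> (\<lambda>_. 0)" "dot (u a) X = 0" "dot (u b) X = 0" "dot (u c) X = 0" for X
    using no_u that unfolding common_zero_def by blast
  from common_zero_u_or_v[OF P this] no_v show False
    unfolding V.common_zero_def by blast
qed

end

section \<open>Tensor rank\<close>

lemma sum_simple_exists: "\<exists>r u v w. (t :: 'a::field tensor3) = sum_simple r u v w"
proof -
  define ms :: "midx list" where "ms = [(False,False), (False,True), (True,False), (True,True)]"
  define ps where "ps = List.product ms ms"
  have "distinct ps" "set ps = UNIV"
    unfolding ps_def ms_def by (simp_all add: UNIV_midx flip: UNIV_Times_UNIV)
  then have bij: "bij_betw ((!) ps) {..<length ps} UNIV"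
    by (simp add: bij_betw_nth)
  define u :: "nat \<Rightarrow> midx \<Rightarrow> 'a" where "u l = delta (fst (ps ! l))" for l
  define v :: "nat \<Rightarrow> midx \<Rightarrow> 'a" where "v l = delta (snd (ps ! l))" for l
  define w where "w l z = t (fst (ps ! l), snd (ps ! l), z)" for l z
  have "t (x,y,z) = sum_simple (length ps) u v w (x,y,z)" for x y z
  proof -
    have "sum_simple (length ps) u v w (x,y,z)
      = (\<Sum>l<length ps. (\<lambda>p. delta (fst p) x * delta (snd p) y * t (fst p, snd p, z)) (ps ! l))"
      unfolding sum_simple_def u_def v_def w_def by simp
    also have "\<dots> = (\<Sum>p\<in>UNIV. delta (fst p) x * delta (snd p) y * t (fst p, snd p, z))"
      by (rule sum.reindex_bij_betw[OF bij])
    also have "\<dots> = (\<Sum>p\<in>UNIV. if p = (x,y) then t (x,y,z) else 0)"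
      by (rule sum.cong) (auto simp: delta_def)
    finally show ?thesis by simp
  qed
  then have "t = sum_simple (length ps) u v w" by (intro ext) auto
  then show ?thesis by blast
qed

lemma tensor_rank_le: "t = sum_simple r u v w \<Longrightarrow> tensor_rank t \<le> r"
  unfolding tensor_rank_def by (rule Least_le) blast

lemma tensor_rank_geI:
  assumes "\<And>r u v w. t = sum_simple r u v w \<Longrightarrow> n \<le> r"
  shows "n \<le> tensor_rank t"
proof -
  have "\<exists>u v w. t = sum_simple (tensor_rank t) u v w"
    unfolding tensor_rank_def by (rule LeastI_ex) (use sum_simple_exists in blast)
  with assms show ?thesis by blast
qed

lemma supp_eq_matmul222_iff:
  assumes "supp (t :: 'a::field tensor3) = supp (matmul222 :: 'a tensor3)"
  shows "t ((a,b),(c,d),(e,f)) \<noteq> 0 \<longleftrightarrow> b = c \<and> d = e \<and> f = a"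
proof -
  have "t ((a,b),(c,d),(e,f)) \<noteq> 0 \<longleftrightarrow> (matmul222 :: 'a tensor3) ((a,b),(c,d),(e,f)) \<noteq> 0"
    using assms unfolding supp_def by blast
  then show ?thesis unfolding matmul222_def by simp
qed

lemma matmul222_support_terms_ge_7:
  assumes supp: "supp (t :: 'a::field tensor3) = supp (matmul222 :: 'a tensor3)"
    and t: "t = sum_simple r u v w"
  shows "7 \<le> r"
proof (rule ccontr)
  assume "\<not> 7 \<le> r"
  define u' where "u' l = (if l < r then u l else (\<lambda>_. 0))" for l
  have "decomp6 t u' v w"
  proof
    show "t ((a,b),(c,d),(e,f)) \<noteq> 0 \<longleftrightarrow> b = c \<and> d = e \<and> f = a" for a b c d e f
      by (rule supp_eq_matmul222_iff[OF supp])
  next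
    fix x y z
    have "(\<Sum>l<6. u' l x * v l y * w l z) = (\<Sum>l<6. if l < r then u l x * v l y * w l z else 0)"
      by (rule sum.cong) (auto simp: u'_def)
    also have "\<dots> = (\<Sum>l\<in>{l \<in> {..<6}. l < r}. u l x * v l y * w l z)"
      by (rule sum.inter_filter[symmetric]) simp
    also have "{l \<in> {..<6}. l < r} = {..<r}" using \<open>\<not> 7 \<le> r\<close> by auto
    finally show "t (x,y,z) = (\<Sum>l<6. u' l x * v l y * w l z)"
      unfolding t sum_simple_def by simp
  qed
  then show False by (rule decomp6.six_terms_impossible)
qed

definition vec4 :: "'a \<Rightarrow> 'a \<Rightarrow> 'a \<Rightarrow> 'a \<Rightarrow> midx \<Rightarrow> 'a" where
  "vec4 a b c d x = (if fst x then (if snd x then d else c) else (if snd x then b else a))"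

definition strassen_u :: "nat \<Rightarrow> midx \<Rightarrow> 'a::field" where
  "strassen_u l = [vec4 1 0 0 1, vec4 0 0 1 1, vec4 1 0 0 0, vec4 0 0 0 1,
                   vec4 1 1 0 0, vec4 (-1) 0 1 0, vec4 0 1 0 (-1)] ! l"

definition strassen_v :: "nat \<Rightarrow> midx \<Rightarrow> 'a::field" where
  "strassen_v l = [vec4 1 0 0 1, vec4 1 0 0 0, vec4 0 1 0 (-1), vec4 (-1) 0 1 0,
                   vec4 0 0 0 1, vec4 1 1 0 0, vec4 0 0 1 1] ! l"

definition strassen_w :: "nat \<Rightarrow> midx \<Rightarrow> 'a::field" where
  "strassen_w l = [vec4 1 0 0 1, vec4 0 1 0 (-1), vec4 0 0 1 1, vec4 1 1 0 0,
                   vec4 (-1) 0 1 0, vec4 0 0 0 1, vec4 1 0 0 0] ! l"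

lemma strassen: "(matmul222 :: 'a::field tensor3) = sum_simple 7 strassen_u strassen_v strassen_w"
proof (rule ext, clarify)
  fix a b c d e f
  have "(\<Sum>l<7::nat. g l) = g 0 + g 1 + g 2 + g 3 + g 4 + g 5 + g 6" for g :: "nat \<Rightarrow> 'a"
    by (simp add: eval_nat_numeral lessThan_Suc add.commute add.left_commute)
  then show "(matmul222 :: 'a tensor3) ((a,b),(c,d),(e,f))
      = sum_simple 7 strassen_u strassen_v strassen_w ((a,b),(c,d),(e,f))"
    unfolding sum_simple_def strassen_u_def strassen_v_def strassen_w_def matmul222_def
    by (cases a; cases b; cases c; cases d; cases e; cases f) (simp_all add: vec4_def)
qed

lemma tensor_rank_matmul222: "tensor_rank (matmul222 :: 'a::field tensor3) = 7"
  using tensor_rank_le[OF strassen] tensor_rank_geI[OF matmul222_support_terms_ge_7[OF refl]]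
  by (rule antisym)

theorem theorem1:
  shows "support_rank (matmul222 :: 'a::field tensor3) = 7"
  unfolding support_rank_def
proof (rule Least_equality)
  show "\<exists>s :: 'a tensor3. supp s = supp (matmul222 :: 'a tensor3) \<and> tensor_rank s = 7"
    using tensor_rank_matmul222 by blast
next
  fix r assume "\<exists>s :: 'a tensor3. supp s = supp (matmul222 :: 'a tensor3) \<and> tensor_rank s = r"
  then show "7 \<le> r" using tensor_rank_geI matmul222_support_terms_ge_7 by metis
qed

end
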